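(* Let $\alpha,\beta,\gamma$ be partitions with $\alpha_1\le 2$ and let $\Gamma$ be an LR-tableau of type $(\alpha,\beta,\gamma)$; let $x$ be the number of entries $1$ in $\Gamma$. Assume: (1) the number of entries $2$ in $\Gamma$ equals $x$ or $x-1$; (2) every row of $\Gamma$ contains at most one (non-empty) box; (3) if row $j$ contains an entry $2$ and row $i$ contains an entry $1$, then $j>i$. Then in the poset $(\mathcal D_\Gamma,\le_{\rm arc})$ all saturated chains have the same length.
   Context: For a partition $\lambda$, $\lambda'$ is its conjugate; the diagram of $\lambda$ is drawn with $\lambda'_i$ boxes in row $i$, so the $i$-th row of $\beta\setminus\gamma$ consists of the boxes in columns $\gamma'_i+1,\dots,\beta'_i$. With $\alpha_1\le2$, $\alpha'=(\alpha'_1,\alpha'_2)$. An LR-tableau of type $(\alpha,\beta,\gamma)$ is a filling of $\beta\setminus\gamma$ with $\alpha'_1$ entries $1$ and $\alpha'_2$ entries $2$, weakly increasing along rows, strictly increasing down columns, such that for each $c\ge0$ the number of entries $1$ in columns to the right of column $c$ is at least the number of entries $2$ there. Place positive integers on a line in decreasing order from left to right. An arc is a pair $(m,n)$, $m>n$ positive integers (source $m$, target $n$); a pole at $n$ is regarded as an arc $(\infty,n)$. An arc diagram of type $(\alpha,\beta,\gamma)$ is a finite multiset of $\alpha'_2$ arcs and $\alpha'_1-\alpha'_2$ poles with, for each $i$, exactly $\beta'_i-\gamma'_i$ members having source or target $i$. It has LR type $\Gamma$ if for each $i$ the number of arcs with source $i$ equals the number of entries $2$ in row $i$ of $\Gamma$;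 $\mathcal D_\Gamma$ is the set of such diagrams. Moves: for $a>b>c>d$, (A) replaces arcs $(a,c),(b,d)$ by $(a,d),(b,c)$; (C) replaces them by $(a,b),(c,d)$; for $a>b>c$, (B) replaces arc $(a,c)$ and pole $(\infty,b)$ by arc $(a,b)$ and pole $(\infty,c)$; (D) replaces them by arc $(b,c)$ and pole $(\infty,a)$. $\Delta\le_{\rm arc}\Delta'$ iff $\Delta$ is obtained from $\Delta'$ by a finite (possibly empty) sequence of moves. A chain is saturated if it has no refinement, i.e. is not properly contained in another chain of the poset. *)

theory Defs
  imports Main "HOL-Library.Multiset" "HOL-Library.Extended_Nat"
begin

text \<open>A partition is a weakly decreasing list of positive integers.
  Parts are indexed from 1; parts beyond the length are 0.\<close>

definition is_partition :: "nat list \<Rightarrow> bool" where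
  "is_partition xs \<longleftrightarrow> sorted_wrt (\<ge>) xs \<and> 0 \<notin> set xs"

definition part :: "nat list \<Rightarrow> nat \<Rightarrow> nat" where
  "part xs i = (if 1 \<le> i \<and> i \<le> length xs then xs ! (i - 1) else 0)"

definition conj :: "nat list \<Rightarrow> nat \<Rightarrow> nat" where
  "conj xs i = length (filter (\<lambda>x. i \<le> x) xs)"

text \<open>Boxes of beta minus gamma: row i (i \<ge> 1) consists of the boxes in columns
  conj gamma i + 1, ..., conj beta i.  A box is a pair (row, column).\<close>
definition skew_boxes :: "nat list \<Rightarrow> nat list \<Rightarrow> (nat \<times> nat) set" where
  "skew_boxes \<beta> \<gamma> = {(i, c). 1 \<le> i \<and> conj \<gamma> i < c \<and> c \<le> conj \<beta> i}"

definition row_boxes :: "nat list \<Rightarrow> nat list \<Rightarrow> nat \<Rightarrow> (nat \<times> nat) set" where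
  "row_boxes \<beta> \<gamma> i = {b \<in> skew_boxes \<beta> \<gamma>. fst b = i}"

definition entries_in_row :: "nat list \<Rightarrow> nat list \<Rightarrow> (nat \<times> nat \<Rightarrow> nat) \<Rightarrow> nat \<Rightarrow> nat \<Rightarrow> nat" where
  "entries_in_row \<beta> \<gamma> T k i = card {b \<in> row_boxes \<beta> \<gamma> i. T b = k}"

definition num_entries :: "nat list \<Rightarrow> nat list \<Rightarrow> (nat \<times> nat \<Rightarrow> nat) \<Rightarrow> nat \<Rightarrow> nat" where
  "num_entries \<beta> \<gamma> T k = card {b \<in> skew_boxes \<beta> \<gamma>. T b = k}"

definition LR_tableau ::
  "nat list \<Rightarrow> nat list \<Rightarrow> nat list \<Rightarrow> (nat \<times> nat \<Rightarrow> nat) \<Rightarrow> bool" where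
  "LR_tableau \<alpha> \<beta> \<gamma> T \<longleftrightarrow>
     (\<forall>i\<ge>1. conj \<gamma> i \<le> conj \<beta> i) \<and>
     (\<forall>b \<in> skew_boxes \<beta> \<gamma>. T b \<in> {1, 2}) \<and>
     num_entries \<beta> \<gamma> T 1 = conj \<alpha> 1 \<and>
     num_entries \<beta> \<gamma> T 2 = conj \<alpha> 2 \<and>
     (\<forall>i c c'. (i, c) \<in> skew_boxes \<beta> \<gamma> \<longrightarrow> (i, c') \<in> skew_boxes \<beta> \<gamma> \<longrightarrow> c < c'
        \<longrightarrow> T (i, c) \<le> T (i, c')) \<and>
     (\<forall>i i' c. (i, c) \<in> skew_boxes \<beta> \<gamma> \<longrightarrow> (i', c) \<in> skew_boxes \<beta> \<gamma> \<longrightarrow> i < i'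
        \<longrightarrow> T (i, c) < T (i', c)) \<and>
     (\<forall>c. card {b \<in> skew_boxes \<beta> \<gamma>. c < snd b \<and> T b = 2}
          \<le> card {b \<in> skew_boxes \<beta> \<gamma>. c < snd b \<and> T b = 1})"

text \<open>An arc is a pair (source, target) with source > target \<ge> 1; a pole at n is
  the arc (\<infinity>, n).  Sources are extended naturals.\<close>
type_synonym arc = "enat \<times> nat"

definition valid_arc :: "arc \<Rightarrow> bool" where
  "valid_arc a \<longleftrightarrow> 1 \<le> snd a \<and> enat (snd a) < fst a"

definition is_pole :: "arc \<Rightarrow> bool" where
  "is_pole a \<longleftrightarrow> fst a = \<infinity>"

definition arc_diagram :: "nat list \<Rightarrow> nat list \<Rightarrow> nat list \<Rightarrow> arc multiset \<Rightarrow> bool" where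
  "arc_diagram \<alpha> \<beta> \<gamma> D \<longleftrightarrow>
     (\<forall>a \<in># D. valid_arc a) \<and>
     size (filter_mset (\<lambda>a. \<not> is_pole a) D) = conj \<alpha> 2 \<and>
     size (filter_mset is_pole D) = conj \<alpha> 1 - conj \<alpha> 2 \<and>
     (\<forall>i\<ge>1. size (filter_mset (\<lambda>a. fst a = enat i \<or> snd a = i) D) = conj \<beta> i - conj \<gamma> i)"

definition has_LR_type :: "nat list \<Rightarrow> nat list \<Rightarrow> (nat \<times> nat \<Rightarrow> nat) \<Rightarrow> arc multiset \<Rightarrow> bool" where
  "has_LR_type \<beta> \<gamma> T D \<longleftrightarrow>
     (\<forall>i\<ge>1. size (filter_mset (\<lambda>a. fst a = enat i) D) = entries_in_row \<beta> \<gamma> T 2 i)"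

definition D_Gamma :: "nat list \<Rightarrow> nat list \<Rightarrow> nat list \<Rightarrow> (nat \<times> nat \<Rightarrow> nat) \<Rightarrow> arc multiset set" where
  "D_Gamma \<alpha> \<beta> \<gamma> T = {D. arc_diagram \<alpha> \<beta> \<gamma> D \<and> has_LR_type \<beta> \<gamma> T D}"

text \<open>arc_move D D': D' is obtained from D by one of the moves (A)-(D).\<close>
definition arc_move :: "arc multiset \<Rightarrow> arc multiset \<Rightarrow> bool" where
  "arc_move D D' \<longleftrightarrow>
     (\<exists>a b c d :: nat. a > b \<and> b > c \<and> c > d \<and>
        {#(enat a, c), (enat b, d)#} \<subseteq># D \<and>
        (D' = D - {#(enat a, c), (enat b, d)#} + {#(enat a, d), (enat b, c)#} \<or>
         D' = D - {#(enat a, c), (enat b, d)#} + {#(enat a, b), (enat c, d)#})) \<or>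
     (\<exists>a b c :: nat. a > b \<and> b > c \<and>
        {#(enat a, c), (\<infinity>, b)#} \<subseteq># D \<and>
        (D' = D - {#(enat a, c), (\<infinity>, b)#} + {#(enat a, b), (\<infinity>, c)#} \<or>
         D' = D - {#(enat a, c), (\<infinity>, b)#} + {#(enat b, c), (\<infinity>, a)#}))"

definition arc_le :: "arc multiset \<Rightarrow> arc multiset \<Rightarrow> bool" where
  "arc_le D D' \<longleftrightarrow> arc_move\<^sup>*\<^sup>* D' D"

definition is_chain_in :: "arc multiset set \<Rightarrow> arc multiset set \<Rightarrow> bool" where
  "is_chain_in P C \<longleftrightarrow> C \<subseteq> P \<and> (\<forall>x \<in> C. \<forall>y \<in> C. arc_le x y \<or> arc_le y x)"

definition saturated_chain_in :: "arc multiset set \<Rightarrow> arc multiset set \<Rightarrow> bool" where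
  "saturated_chain_in P C \<longleftrightarrow> is_chain_in P C \<and> \<not> (\<exists>C'. is_chain_in P C' \<and> C \<subset> C')"

definition chain_length :: "arc multiset set \<Rightarrow> nat" where
  "chain_length C = card C - 1"

end

theory Submission
  imports Defs
begin

text \<open>
  Since each row of \<open>\<Gamma>\<close> has at most one box, every point is an endpoint of at most one
  member of a diagram in \<open>\<D>\<^sub>\<Gamma>\<close>, and condition (3) puts every target below every finite source.
  Hence all diagrams in \<open>\<D>\<^sub>\<Gamma>\<close> have the same sources and the same targets, and a diagram is
  a matching between them. Moves (C) and (D) lower the sum of the finite sources, so inside
  \<open>\<D>\<^sub>\<Gamma>\<close> only (A) and (B) occur, and each of them turns a crossing pair of arcs into a nested one.
  The number of crossings is therefore a rank function: it drops under every move, it is \<open>0\<close>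
  at minimal diagrams and equal to the number of pairs of arcs at maximal ones, and a move
  dropping it by more than one factors through diagrams of intermediate rank, exactly as in
  the Bruhat order of a symmetric group. So \<open>\<D>\<^sub>\<Gamma>\<close> is graded, and every saturated chain
  meets every rank exactly once.
\<close>

section \<open>Maximal chains in graded orders\<close>

locale graded_order =
  fixes P :: "'a set" and le :: "'a \<Rightarrow> 'a \<Rightarrow> bool" and rank :: "'a \<Rightarrow> nat" and n :: nat
  assumes le_refl: "le x x"
    and le_trans: "le x y \<Longrightarrow> le y z \<Longrightarrow> le x z"
    and rank_strict_mono: "x \<in> P \<Longrightarrow> y \<in> P \<Longrightarrow> le x y \<Longrightarrow> x \<noteq> y \<Longrightarrow> rank x < rank y"
    and rank_le: "x \<in> P \<Longrightarrow> rank x \<le> n"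
    and rank_minimal: "x \<in> P \<Longrightarrow> \<forall>w\<in>P. le w x \<longrightarrow> w = x \<Longrightarrow> rank x = 0"
    and rank_maximal: "x \<in> P \<Longrightarrow> \<forall>w\<in>P. le x w \<longrightarrow> w = x \<Longrightarrow> rank x = n"
    and exists_between: "x \<in> P \<Longrightarrow> y \<in> P \<Longrightarrow> le x y \<Longrightarrow> rank x + 2 \<le> rank y \<Longrightarrow>
      \<exists>w\<in>P. le x w \<and> le w y \<and> rank x < rank w \<and> rank w < rank y"

locale maximal_chain_in_graded_order = graded_order +
  fixes C
  assumes chain_subset: "C \<subseteq> P"
    and chain_comparable: "x \<in> C \<Longrightarrow> y \<in> C \<Longrightarrow> le x y \<or> le y x"
    and chain_maximal: "w \<in> P \<Longrightarrow> \<forall>c\<in>C. le c w \<or> le w c \<Longrightarrow> w \<in> C"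
    and nonempty: "P \<noteq> {}"
begin

lemma inj_on_rank: "inj_on rank C"
proof (rule inj_onI, rule ccontr)
  fix x y assume "x \<in> C" "y \<in> C" "rank x = rank y" "x \<noteq> y"
  then show False
    using chain_comparable[of x y] rank_strict_mono[of x y] rank_strict_mono[of y x] chain_subset
    by auto
qed

lemma le_if_rank_less: "x \<in> C \<Longrightarrow> y \<in> C \<Longrightarrow> rank x < rank y \<Longrightarrow> le x y"
  using chain_comparable[of x y] rank_strict_mono[of y x] chain_subset by fastforce

lemma le_if_rank_le: "x \<in> C \<Longrightarrow> y \<in> C \<Longrightarrow> rank x \<le> rank y \<Longrightarrow> le x y"
  using le_if_rank_less le_refl inj_on_rank by (cases "rank x = rank y") (auto dest: inj_onD)

lemma chain_nonempty: "C \<noteq> {}"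
  using nonempty chain_maximal by blast

lemma rank_zero_in_chain: "0 \<in> rank ` C"
proof -
  obtain c0 where "c0 \<in> C" using chain_nonempty by blast
  then obtain t where t: "t \<in> C" "\<forall>c\<in>C. rank t \<le> rank c"
    using ex_has_least_nat[of "\<lambda>c. c \<in> C" c0 rank] by blast
  have "rank t = 0"
  proof (rule rank_minimal)
    show "t \<in> P" using t chain_subset by blast
    show "\<forall>w\<in>P. le w t \<longrightarrow> w = t"
    proof (intro ballI impI, rule ccontr)
      fix w assume w: "w \<in> P" "le w t" "w \<noteq> t"
      have "w \<in> C"
        using w t le_if_rank_le chain_subset by (intro chain_maximal) (blast intro: le_trans)+
      then show False using w t rank_strict_mono[of w t] chain_subset by fastforce
    qed
  qed
  then show ?thesis using t by force
qed

lemma rank_top_in_chain: "n \<in> rank ` C"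
proof -
  obtain c0 where "c0 \<in> C" using chain_nonempty by blast
  moreover have "\<forall>c. c \<in> C \<longrightarrow> rank c < Suc n" using rank_le chain_subset by (simp add: less_Suc_eq_le subset_iff)
  ultimately obtain b where b: "b \<in> C" "\<forall>c\<in>C. rank c \<le> rank b"
    using Lattices_Big.ex_has_greatest_nat[of "\<lambda>c. c \<in> C" c0 rank "Suc n"] by blast
  have "rank b = n"
  proof (rule rank_maximal)
    show "b \<in> P" using b chain_subset by blast
    show "\<forall>w\<in>P. le b w \<longrightarrow> w = b"
    proof (intro ballI impI, rule ccontr)
      fix w assume w: "w \<in> P" "le b w" "w \<noteq> b"
      have "w \<in> C"
        using w b le_if_rank_le chain_subset by (intro chain_maximal) (blast intro: le_trans)+
      then show False using w b rank_strict_mono[of b w] chain_subset by fastforce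
    qed
  qed
  then show ?thesis using b by force
qed

lemma rank_Suc_in_chain:
  assumes "k \<in> rank ` C" and "k < n"
  shows "Suc k \<in> rank ` C"
proof (rule ccontr)
  assume gap: "Suc k \<notin> rank ` C"
  obtain c where c: "c \<in> C" "rank c = k" using assms(1) by blast
  obtain b where "b \<in> C" "rank b = n" using rank_top_in_chain by blast
  then obtain d where d: "d \<in> C" "k < rank d" and least: "\<forall>e. e \<in> C \<and> k < rank e \<longrightarrow> rank d \<le> rank e"
    using ex_has_least_nat[of "\<lambda>d. d \<in> C \<and> k < rank d" b rank] assms(2) by blast
  then have "rank c + 2 \<le> rank d" using gap c by (cases "rank d = Suc k") force+
  then obtain w where w: "w \<in> P" "le c w" "le w d" "rank c < rank w" "rank w < rank d"
    using exists_between[of c d] le_if_rank_less c d chain_subset by force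
  have "w \<in> C"
  proof (rule chain_maximal[OF w(1)], intro ballI)
    fix e assume e: "e \<in> C"
    show "le e w \<or> le w e"
    proof (cases "k < rank e")
      case True
      then have "le d e" using d e least le_if_rank_le by blast
      then show ?thesis using w le_trans by blast
    next
      case False
      then have "le e c" using c e le_if_rank_le by simp
      then show ?thesis using w le_trans by blast
    qed
  qed
  then show False using least w c by force
qed

lemma rank_image_chain: "rank ` C = {..n}"
proof
  show "rank ` C \<subseteq> {..n}" using rank_le chain_subset by auto
  have "k \<in> rank ` C" if "k \<le> n" for k
    using that by (induction k) (auto intro: rank_zero_in_chain rank_Suc_in_chain)
  then show "{..n} \<subseteq> rank ` C" by blast
qed

lemma card_chain: "card C = n + 1"
  using card_image[OF inj_on_rank] rank_image_chain by simp

end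

section \<open>Crossings in arc diagrams\<close>

lemma subset_mset_pairE:
  assumes "{#x, y#} \<subseteq># D"
  obtains M where "D = add_mset x (add_mset y M)" and "D - {#x, y#} = M"
proof -
  obtain M where "D = {#x, y#} + M" using assms by (auto simp: subset_mset.le_iff_add)
  then show ?thesis using that by simp
qed

lemma exists_add_mset_add_mset:
  assumes "x \<in># D" and "y \<in># D" and "x \<noteq> y"
  shows "\<exists>M. D = add_mset x (add_mset y M)"
proof -
  obtain M where M: "D = add_mset x M" using assms(1) by (blast dest: multi_member_split)
  then have "y \<in># M" using assms by auto
  then show ?thesis using M by (blast dest: multi_member_split)
qed

lemma count_image_mset_eq_size_filter: "count (image_mset f M) s = size (filter_mset (\<lambda>a. f a = s) M)"
  by (induction M) auto

lemma size_filter_mset_image: "size (filter_mset (\<lambda>a. Q (f a)) M) = size (filter_mset Q (image_mset f M))"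
  by (induction M) auto

lemma size_filter_mset_disj:
  assumes "\<forall>a\<in>#M. \<not> (P a \<and> Q a)"
  shows "size (filter_mset (\<lambda>a. P a \<or> Q a) M) = size (filter_mset P M) + size (filter_mset Q M)"
  using assms by (induction M) auto

text \<open>Once every target lies below every finite source, \<open>crosses x y\<close> says that the arcs
  interleave as \<open>fst x > fst y > snd x > snd y\<close>, and \<open>uncross\<close> is exactly a move (A) (finite
  \<open>s1\<close>) or (B) (\<open>s1 = \<infinity>\<close>), replacing such a pair by the nested pair.\<close>

definition crosses :: "arc \<Rightarrow> arc \<Rightarrow> bool" where
  "crosses x y \<longleftrightarrow> fst y < fst x \<and> snd y < snd x"

definition cross_count :: "arc \<Rightarrow> arc \<Rightarrow> nat" where
  "cross_count x y = of_bool (crosses x y) + of_bool (crosses y x)"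

definition crossings :: "arc multiset \<Rightarrow> nat" where
  "crossings D = (\<Sum>x\<in>#D. \<Sum>y\<in>#D. of_bool (crosses x y))"

definition source_pairs :: "arc multiset \<Rightarrow> nat" where
  "source_pairs D = (\<Sum>x\<in>#D. \<Sum>y\<in>#D. of_bool (fst y < fst x))"

definition source_sum :: "arc multiset \<Rightarrow> nat" where
  "source_sum D = (\<Sum>x\<in>#D. case fst x of enat n \<Rightarrow> n | \<infinity> \<Rightarrow> 0)"

definition uncross :: "arc multiset \<Rightarrow> arc multiset \<Rightarrow> bool" where
  "uncross D D' \<longleftrightarrow> (\<exists>s1 s2 t1 t2 M. s2 < s1 \<and> t2 < t1 \<and> enat t1 < s2 \<and>
      D = add_mset (s1, t1) (add_mset (s2, t2) M) \<and> D' = add_mset (s1, t2) (add_mset (s2, t1) M))"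

lemma uncrossI:
  "s2 < s1 \<Longrightarrow> t2 < t1 \<Longrightarrow> enat t1 < s2 \<Longrightarrow>
    uncross (add_mset (s1, t1) (add_mset (s2, t2) M)) (add_mset (s1, t2) (add_mset (s2, t1) M))"
  unfolding uncross_def by blast

lemma crossings_le_source_pairs: "crossings D \<le> source_pairs D"
  unfolding crossings_def source_pairs_def by (intro sum_mset_mono) (auto simp: crosses_def)

lemma crossings_eq_source_pairs:
  assumes "\<forall>x\<in>#D. \<forall>y\<in>#D. fst y < fst x \<longrightarrow> snd y < snd x"
  shows "crossings D = source_pairs D"
  unfolding crossings_def source_pairs_def
  using assms by (intro arg_cong[of _ _ sum_mset] image_mset_cong) (auto simp: crosses_def)

lemma source_pairs_cong: "image_mset fst D = image_mset fst D' \<Longrightarrow> source_pairs D = source_pairs D'"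
proof -
  have "source_pairs D = (\<Sum>a\<in>#image_mset fst D. \<Sum>b\<in>#image_mset fst D. of_bool (b < a))" for D
    by (simp add: source_pairs_def multiset.map_comp o_def)
  then show "image_mset fst D = image_mset fst D' \<Longrightarrow> ?thesis" by metis
qed

lemma source_sum_cong: "image_mset fst D = image_mset fst D' \<Longrightarrow> source_sum D = source_sum D'"
proof -
  have "source_sum D = (\<Sum>a\<in>#image_mset fst D. case a of enat n \<Rightarrow> n | \<infinity> \<Rightarrow> 0)" for D
    by (simp add: source_sum_def multiset.map_comp o_def)
  then show "image_mset fst D = image_mset fst D' \<Longrightarrow> ?thesis" by metis
qed

lemma uncross_imp_arc_move: "uncross D D' \<Longrightarrow> arc_move D D'"
proof -
  assume "uncross D D'"
  then obtain s1 s2 t1 t2 M where h: "s2 < s1" "t2 < t1" "enat t1 < s2"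
    "D = add_mset (s1, t1) (add_mset (s2, t2) M)" "D' = add_mset (s1, t2) (add_mset (s2, t1) M)"
    unfolding uncross_def by blast
  obtain b where b: "s2 = enat b" using h(1) by (cases s2) auto
  show ?thesis
  proof (cases s1)
    case (enat a)
    then show ?thesis unfolding arc_move_def using h b
      by (intro disjI1 exI[of _ a] exI[of _ b] exI[of _ t1] exI[of _ t2]) simp
  next
    case infinity
    then show ?thesis unfolding arc_move_def using h b
      by (intro disjI2 exI[of _ b] exI[of _ t1] exI[of _ t2]) (simp add: add_mset_commute)
  qed
qed

lemma uncross_same_sources_targets:
  "uncross D D' \<Longrightarrow> image_mset fst D' = image_mset fst D \<and> image_mset snd D' = image_mset snd D"
  unfolding uncross_def by (auto simp: add_mset_commute)

lemma arc_move_uncross_or_source_sum_less: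
  assumes "arc_move D D'"
  shows "uncross D D' \<or> source_sum D' < source_sum D"
  using assms unfolding arc_move_def
proof (elim disjE exE conjE)
  fix a b c d :: nat
  assume o: "b < a" "c < b" "d < c" and sub: "{#(enat a, c), (enat b, d)#} \<subseteq># D"
  obtain M where D: "D = add_mset (enat a, c) (add_mset (enat b, d) M)"
    and M: "D - {#(enat a, c), (enat b, d)#} = M" using sub by (rule subset_mset_pairE)
  show "D' = D - {#(enat a, c), (enat b, d)#} + {#(enat a, d), (enat b, c)#} \<Longrightarrow> ?thesis"
    unfolding M uncross_def D using o
    by (intro disjI1 exI[of _ "enat a"] exI[of _ "enat b"] exI[of _ c] exI[of _ d] exI[of _ M]) simp
  show "D' = D - {#(enat a, c), (enat b, d)#} + {#(enat a, b), (enat c, d)#} \<Longrightarrow> ?thesis"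
    unfolding M using o by (simp add: D source_sum_def)
next
  fix a b c :: nat
  assume o: "b < a" "c < b" and sub: "{#(enat a, c), (\<infinity>, b)#} \<subseteq># D"
  obtain M where D: "D = add_mset (enat a, c) (add_mset (\<infinity>, b) M)"
    and M: "D - {#(enat a, c), (\<infinity>, b)#} = M" using sub by (rule subset_mset_pairE)
  show "D' = D - {#(enat a, c), (\<infinity>, b)#} + {#(enat a, b), (\<infinity>, c)#} \<Longrightarrow> ?thesis"
    unfolding M uncross_def D using o
    by (intro disjI1 exI[of _ \<infinity>] exI[of _ "enat a"] exI[of _ b] exI[of _ c] exI[of _ M])
      (simp add: add_mset_commute)
  show "D' = D - {#(enat a, c), (\<infinity>, b)#} + {#(enat b, c), (\<infinity>, a)#} \<Longrightarrow> ?thesis"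
    unfolding M using o by (simp add: D source_sum_def)
qed

lemma crossings_add_mset:
  "crossings (add_mset x D) = crossings D + (\<Sum>z\<in>#D. cross_count x z)"
  by (simp add: crossings_def cross_count_def crosses_def sum_mset.distrib algebra_simps)

lemma cross_count_swap_targets:
  assumes "s2 < s1" "t2 < t1" "fst z \<notin> {s1, s2}" "snd z \<notin> {t1, t2}"
  shows "cross_count (s1, t2) z + cross_count (s2, t1) z \<le> cross_count (s1, t1) z + cross_count (s2, t2) z"
    and "\<not> (s2 < fst z \<and> fst z < s1 \<and> t2 < snd z \<and> snd z < t1) \<Longrightarrow>
      cross_count (s1, t2) z + cross_count (s2, t1) z = cross_count (s1, t1) z + cross_count (s2, t2) z"
  using assms
  by (cases z; auto simp: cross_count_def crosses_def; cases "fst z < s2"; cases "fst z < s1";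
      cases "snd z < t2"; cases "snd z < t1"; auto dest: order.strict_trans)+

lemma crossings_uncross:
  assumes "s2 < s1" "t2 < t1" and apart: "\<forall>z\<in>#M. fst z \<notin> {s1, s2} \<and> snd z \<notin> {t1, t2}"
  defines "D \<equiv> add_mset (s1, t1) (add_mset (s2, t2) M)"
    and "D' \<equiv> add_mset (s1, t2) (add_mset (s2, t1) M)"
  shows "crossings D' < crossings D"
    and "\<forall>z\<in>#M. \<not> (s2 < fst z \<and> fst z < s1 \<and> t2 < snd z \<and> snd z < t1) \<Longrightarrow>
      crossings D = crossings D' + 1"
proof -
  have D: "crossings D = crossings M + (\<Sum>z\<in>#M. cross_count (s1, t1) z + cross_count (s2, t2) z) + 1"
    using assms(1,2) by (simp add: D_def crossings_add_mset sum_mset.distrib cross_count_def crosses_def)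
  have D': "crossings D' = crossings M + (\<Sum>z\<in>#M. cross_count (s1, t2) z + cross_count (s2, t1) z)"
    using assms(1,2) by (simp add: D'_def crossings_add_mset sum_mset.distrib cross_count_def crosses_def)
  have "(\<Sum>z\<in>#M. cross_count (s1, t2) z + cross_count (s2, t1) z)
      \<le> (\<Sum>z\<in>#M. cross_count (s1, t1) z + cross_count (s2, t2) z)"
    using cross_count_swap_targets(1)[OF assms(1,2)] apart by (intro sum_mset_mono) blast
  then show "crossings D' < crossings D" unfolding D D' by linarith
  assume "\<forall>z\<in>#M. \<not> (s2 < fst z \<and> fst z < s1 \<and> t2 < snd z \<and> snd z < t1)"
  then have "(\<Sum>z\<in>#M. cross_count (s1, t2) z + cross_count (s2, t1) z)
      = (\<Sum>z\<in>#M. cross_count (s1, t1) z + cross_count (s2, t2) z)"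
    using cross_count_swap_targets(2)[OF assms(1,2)] apart
    by (intro arg_cong[of _ _ sum_mset] image_mset_cong) blast
  then show "crossings D = crossings D' + 1" unfolding D D' by linarith
qed

lemma arc_le_refl: "arc_le D D"
  by (simp add: arc_le_def)

lemma arc_le_trans: "arc_le D1 D2 \<Longrightarrow> arc_le D2 D3 \<Longrightarrow> arc_le D1 D3"
  unfolding arc_le_def by (meson rtranclp_trans)

lemma arc_le_if_uncross_path: "uncross\<^sup>*\<^sup>* D' D \<Longrightarrow> arc_le D D'"
  unfolding arc_le_def using mono_rtranclp[of uncross arc_move] uncross_imp_arc_move by blast

lemma arc_move_path_source_sum:
  "arc_move\<^sup>*\<^sup>* D' D \<Longrightarrow> source_sum D \<le> source_sum D' \<and> (source_sum D = source_sum D' \<longrightarrow> uncross\<^sup>*\<^sup>* D' D)"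
proof (induction rule: rtranclp_induct)
  case (step D1 D)
  from arc_move_uncross_or_source_sum_less[OF step(2)] show ?case
  proof
    assume "uncross D1 D"
    then show ?thesis using step.IH source_sum_cong uncross_same_sources_targets
      by (metis rtranclp.rtrancl_into_rtrancl)
  qed (use step.IH in auto)
qed simp

section \<open>Diagrams of LR type \<open>\<Gamma>\<close>\<close>

lemma card_row_boxes:
  assumes i: "1 \<le> i"
  shows "card (row_boxes \<beta> \<gamma> i) = conj \<beta> i - conj \<gamma> i"
proof -
  have "row_boxes \<beta> \<gamma> i = Pair i ` {conj \<gamma> i<..conj \<beta> i}"
    using i by (auto simp: row_boxes_def skew_boxes_def image_iff)
  then show ?thesis by (simp add: card_image inj_on_def)
qed

lemma size_incident_eq_count_sources_targets:
  assumes "\<forall>a\<in>#D. valid_arc a"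
  shows "size (filter_mset (\<lambda>a. fst a = enat i \<or> snd a = i) D)
    = count (image_mset fst D) (enat i) + count (image_mset snd D) i"
proof -
  have "\<forall>a\<in>#D. \<not> (fst a = enat i \<and> snd a = i)" using assms by (auto simp: valid_arc_def)
  then show ?thesis by (simp add: size_filter_mset_disj count_image_mset_eq_size_filter)
qed

locale single_box_LR_tableau =
  fixes \<alpha> \<beta> \<gamma> :: "nat list" and T :: "nat \<times> nat \<Rightarrow> nat"
  assumes LR: "LR_tableau \<alpha> \<beta> \<gamma> T"
    and twos_vs_ones: "num_entries \<beta> \<gamma> T 2 = num_entries \<beta> \<gamma> T 1
         \<or> num_entries \<beta> \<gamma> T 2 + 1 = num_entries \<beta> \<gamma> T 1"
    and single_box: "\<forall>i\<ge>1. card (row_boxes \<beta> \<gamma> i) \<le> 1"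
    and twos_below_ones: "\<forall>i j. 1 \<le> i \<longrightarrow> 1 \<le> j \<longrightarrow> entries_in_row \<beta> \<gamma> T 2 j > 0
           \<longrightarrow> entries_in_row \<beta> \<gamma> T 1 i > 0 \<longrightarrow> j > i"
begin

abbreviation "\<D> \<equiv> D_Gamma \<alpha> \<beta> \<gamma> T"

lemma valid_arc_D_Gamma: "D \<in> \<D> \<Longrightarrow> a \<in># D \<Longrightarrow> valid_arc a"
  by (auto simp: D_Gamma_def arc_diagram_def)

lemma count_sources:
  assumes "D \<in> \<D>"
  shows "count (image_mset fst D) s = (case s of
    \<infinity> \<Rightarrow> conj \<alpha> 1 - conj \<alpha> 2 | enat i \<Rightarrow> if 1 \<le> i then entries_in_row \<beta> \<gamma> T 2 i else 0)"
proof (cases s)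
  case (enat i)
  show ?thesis
  proof (cases "1 \<le> i")
    case True
    then show ?thesis using assms enat
      by (auto simp: count_image_mset_eq_size_filter D_Gamma_def has_LR_type_def)
  next
    case False
    then have "\<forall>a\<in>#D. fst a \<noteq> s" using valid_arc_D_Gamma[OF assms] enat
      by (fastforce simp: valid_arc_def zero_enat_def)
    then show ?thesis using enat False by (auto simp: count_eq_zero_iff)
  qed
next
  case infinity
  have "size (filter_mset is_pole D) = conj \<alpha> 1 - conj \<alpha> 2"
    using assms by (simp add: D_Gamma_def arc_diagram_def)
  then show ?thesis using infinity by (simp add: count_image_mset_eq_size_filter is_pole_def[abs_def])
qed

lemma count_sources_targets:
  assumes "D \<in> \<D>" and "1 \<le> i"
  shows "count (image_mset fst D) (enat i) + count (image_mset snd D) i = conj \<beta> i - conj \<gamma> i"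
  using assms size_incident_eq_count_sources_targets[of D i] valid_arc_D_Gamma[OF assms(1)]
  by (simp add: D_Gamma_def arc_diagram_def)

lemma count_targets:
  assumes "D \<in> \<D>"
  shows "count (image_mset snd D) i =
    (if 1 \<le> i then (conj \<beta> i - conj \<gamma> i) - entries_in_row \<beta> \<gamma> T 2 i else 0)"
proof (cases "1 \<le> i")
  case True
  then show ?thesis using count_sources_targets[OF assms True] count_sources[OF assms, of "enat i"] by simp
next
  case False
  then have "\<forall>a\<in>#D. snd a \<noteq> i" using valid_arc_D_Gamma[OF assms] by (fastforce simp: valid_arc_def)
  then show ?thesis using False by (auto simp: count_eq_zero_iff)
qed

lemma D_Gamma_same_sources_targets:
  "D \<in> \<D> \<Longrightarrow> D' \<in> \<D> \<Longrightarrow> image_mset fst D = image_mset fst D' \<and> image_mset snd D = image_mset snd D'"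
  by (auto intro!: multiset_eqI simp: count_sources count_targets)

lemma D_Gamma_if_same_sources_targets:
  assumes D: "D \<in> \<D>" and valid: "\<forall>a\<in>#D'. valid_arc a"
    and sources: "image_mset fst D' = image_mset fst D" and targets: "image_mset snd D' = image_mset snd D"
  shows "D' \<in> \<D>"
proof -
  have same_size: "size (filter_mset (\<lambda>a. Q (fst a)) D') = size (filter_mset (\<lambda>a. Q (fst a)) D)" for Q
    by (simp add: size_filter_mset_image sources)
  have "arc_diagram \<alpha> \<beta> \<gamma> D'"
    using D same_size[of "\<lambda>s. s \<noteq> \<infinity>"] same_size[of "\<lambda>s. s = \<infinity>"] valid sources targets
      size_incident_eq_count_sources_targets[OF valid] size_incident_eq_count_sources_targets[of D] valid_arc_D_Gamma[OF D]
    by (simp add: D_Gamma_def arc_diagram_def is_pole_def[abs_def])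
  moreover have "has_LR_type \<beta> \<gamma> T D'"
    using D same_size[of "\<lambda>s. s = enat _"] by (simp add: D_Gamma_def has_LR_type_def)
  ultimately show ?thesis by (simp add: D_Gamma_def)
qed

lemma count_sources_le_one: "D \<in> \<D> \<Longrightarrow> count (image_mset fst D) s \<le> 1"
proof -
  assume D: "D \<in> \<D>"
  have "conj \<alpha> 1 - conj \<alpha> 2 \<le> 1" using LR twos_vs_ones by (auto simp: LR_tableau_def)
  then show ?thesis
    using count_sources[OF D, of s] count_sources_targets[OF D] card_row_boxes single_box
    by (cases s) (fastforce split: if_splits)+
qed

lemma count_targets_le_one: "D \<in> \<D> \<Longrightarrow> count (image_mset snd D) t \<le> 1"
  using count_targets[of D t] count_sources_targets[of D t] card_row_boxes[of t] single_box
  by (cases "1 \<le> t") fastforce+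

lemma endpoints_apart:
  assumes "D \<in> \<D>" and "D = add_mset x (add_mset y M)" and "z \<in># M"
  shows "fst z \<notin> {fst x, fst y} \<and> snd z \<notin> {snd x, snd y}"
proof -
  obtain M' where "M = add_mset z M'" using assms(3) by (blast dest: multi_member_split)
  then show ?thesis
    using count_sources_le_one[OF assms(1)] count_targets_le_one[OF assms(1)] assms(2)
    by (fastforce split: if_splits)
qed

lemma targets_distinct: "D \<in> \<D> \<Longrightarrow> x \<in># D \<Longrightarrow> y \<in># D \<Longrightarrow> x \<noteq> y \<Longrightarrow> snd x \<noteq> snd y"
  using exists_add_mset_add_mset count_targets_le_one[of D "snd x"] by fastforce

lemma row_of_source_has_two:
  assumes "D \<in> \<D>" and "x \<in># D" and "fst x = enat i"
  shows "1 \<le> i \<and> entries_in_row \<beta> \<gamma> T 2 i > 0"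
proof -
  have "1 \<le> i" using valid_arc_D_Gamma[OF assms(1,2)] assms(3)
    by (cases x) (auto simp: valid_arc_def zero_enat_def[symmetric] enat_0_iff)
  moreover have "count (image_mset fst D) (enat i) > 0" using assms(2,3) by (force simp: image_iff)
  ultimately show ?thesis using count_sources[OF assms(1), of "enat i"] by simp
qed

lemma row_of_target_has_one:
  assumes "D \<in> \<D>" and "y \<in># D"
  shows "1 \<le> snd y \<and> entries_in_row \<beta> \<gamma> T 1 (snd y) > 0"
proof -
  define j where "j = snd y"
  have j: "1 \<le> j" using valid_arc_D_Gamma[OF assms] by (simp add: valid_arc_def j_def)
  have "count (image_mset snd D) j > 0" using assms(2) by (force simp: j_def)
  then have "card (row_boxes \<beta> \<gamma> j) = 1" and no_two: "entries_in_row \<beta> \<gamma> T 2 j = 0"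
    using count_targets[OF assms(1), of j] count_sources_targets[OF assms(1) j] card_row_boxes[OF j]
      single_box j by (auto split: if_splits)
  then obtain b where row: "row_boxes \<beta> \<gamma> j = {b}" by (auto simp: card_Suc_eq)
  then have "T b \<in> {1, 2}" using LR by (auto simp: LR_tableau_def row_boxes_def)
  moreover have "T b \<noteq> 2" using no_two row by (auto simp: entries_in_row_def)
  ultimately have "{c \<in> row_boxes \<beta> \<gamma> j. T c = 1} = {b}" using row by auto
  then show ?thesis using j j_def by (simp add: entries_in_row_def)
qed

lemma target_below_source: "D \<in> \<D> \<Longrightarrow> x \<in># D \<Longrightarrow> y \<in># D \<Longrightarrow> enat (snd y) < fst x"
  using row_of_source_has_two row_of_target_has_one twos_below_ones by (cases "fst x") auto

lemma uncross_D_Gamma: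
  assumes D: "D \<in> \<D>" and "uncross D D'"
  shows "D' \<in> \<D>"
proof -
  obtain s1 s2 t1 t2 M where h: "s2 < s1" "t2 < t1" "enat t1 < s2"
    "D = add_mset (s1, t1) (add_mset (s2, t2) M)" "D' = add_mset (s1, t2) (add_mset (s2, t1) M)"
    using assms(2) unfolding uncross_def by blast
  have "enat t2 < s1" using h(1-3) by (metis enat_ord_simps(2) order.strict_trans)
  moreover have "1 \<le> t2" using valid_arc_D_Gamma[OF D, of "(s2, t2)"] h(4) by (simp add: valid_arc_def)
  ultimately have "\<forall>a\<in>#D'. valid_arc a" using h valid_arc_D_Gamma[OF D] by (auto simp: valid_arc_def)
  then show ?thesis using D_Gamma_if_same_sources_targets[OF D] uncross_same_sources_targets[OF assms(2)]
    by blast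
qed

lemma crossings_uncross_less:
  assumes "D \<in> \<D>" and "uncross D D'"
  shows "crossings D' < crossings D"
proof -
  obtain s1 s2 t1 t2 M where h: "s2 < s1" "t2 < t1"
    "D = add_mset (s1, t1) (add_mset (s2, t2) M)" "D' = add_mset (s1, t2) (add_mset (s2, t1) M)"
    using assms(2) unfolding uncross_def by blast
  then show ?thesis using crossings_uncross(1)[OF h(1,2)] endpoints_apart[OF assms(1) h(3)] by simp
qed

text \<open>An arc lying inside the box spanned by the uncrossed pair splits the move into three
  moves, as a transposition of non-adjacent values in the Bruhat order factors through the
  values in between.\<close>

lemma uncross_factor:
  assumes D: "D \<in> \<D>" and "uncross D D'" and "crossings D \<noteq> crossings D' + 1"
  shows "\<exists>w w'. uncross D w \<and> uncross w w' \<and> uncross w' D'"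
proof -
  obtain s1 s2 t1 t2 M where h: "s2 < s1" "t2 < t1" "enat t1 < s2"
    and D_eq: "D = add_mset (s1, t1) (add_mset (s2, t2) M)"
    and D'_eq: "D' = add_mset (s1, t2) (add_mset (s2, t1) M)"
    using assms(2) unfolding uncross_def by blast
  have "\<forall>z\<in>#M. fst z \<notin> {s1, s2} \<and> snd z \<notin> {t1, t2}"
    using endpoints_apart[OF D D_eq] by simp
  then have "\<not> (\<forall>z\<in>#M. \<not> (s2 < fst z \<and> fst z < s1 \<and> t2 < snd z \<and> snd z < t1))"
    using crossings_uncross(2)[OF h(1,2)] assms(3)[unfolded D_eq D'_eq] by blast
  then obtain u v where z: "(u, v) \<in># M" "s2 < u" "u < s1" "t2 < v" "v < t1" by auto
  obtain M' where M: "M = add_mset (u, v) M'" using z(1) by (blast dest: multi_member_split)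
  have "enat t1 < u" using target_below_source[OF D, of "(u, v)" "(s1, t1)"] D_eq z(1) by simp
  have "enat v < u" using valid_arc_D_Gamma[OF D, of "(u, v)"] D_eq z(1) by (simp add: valid_arc_def)
  define w where "w = add_mset (s1, v) (add_mset (u, t1) (add_mset (s2, t2) M'))"
  define w' where "w' = add_mset (s1, v) (add_mset (u, t2) (add_mset (s2, t1) M'))"
  have "D = add_mset (s1, t1) (add_mset (u, v) (add_mset (s2, t2) M'))"
    by (simp add: D_eq M add_mset_commute)
  then have "uncross D w"
    unfolding w_def using uncrossI[of u s1 v t1] z \<open>enat t1 < u\<close> by simp
  moreover have "w = add_mset (u, t1) (add_mset (s2, t2) (add_mset (s1, v) M'))"
    and "w' = add_mset (u, t2) (add_mset (s2, t1) (add_mset (s1, v) M'))"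
    by (simp_all add: w_def w'_def add_mset_commute)
  then have "uncross w w'" using uncrossI[of s2 u t2 t1] z h(3) by simp
  moreover have "D' = add_mset (s1, t2) (add_mset (u, v) (add_mset (s2, t1) M'))"
    by (simp add: D'_eq M add_mset_commute)
  then have "uncross w' D'"
    unfolding w'_def using uncrossI[of u s1 t2 v] z \<open>enat v < u\<close> by simp
  ultimately show ?thesis by blast
qed

lemma exists_uncross:
  assumes D: "D \<in> \<D>" and x: "x \<in># D" and y: "y \<in># D" and "crosses x y"
  shows "\<exists>D'. uncross D D'"
proof -
  obtain s1 t1 s2 t2 where xy: "x = (s1, t1)" "y = (s2, t2)" by fastforce
  then have "s2 < s1" "t2 < t1" using assms(4) by (auto simp: crosses_def)
  moreover obtain M where "D = add_mset x (add_mset y M)"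
    using exists_add_mset_add_mset[OF x y] \<open>s2 < s1\<close> xy by auto
  moreover have "enat t1 < s2" using target_below_source[OF D y x] xy by simp
  ultimately show ?thesis using uncrossI[of s2 s1 t2 t1 M] xy by blast
qed

lemma exists_uncross_into:
  assumes D: "D \<in> \<D>" and x: "x \<in># D" and y: "y \<in># D" and "fst y < fst x" "snd x < snd y"
  shows "\<exists>D0 \<in> \<D>. uncross D0 D"
proof -
  obtain s1 t2 s2 t1 where xy: "x = (s1, t2)" "y = (s2, t1)" by fastforce
  then have order: "s2 < s1" "t2 < t1" using assms(4,5) by auto
  obtain M where D_eq: "D = add_mset x (add_mset y M)"
    using exists_add_mset_add_mset[OF x y] assms(4) by auto
  define D0 where "D0 = add_mset (s1, t1) (add_mset (s2, t2) M)"
  have "1 \<le> t2" "enat t1 < s2"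
    using valid_arc_D_Gamma[OF D x] valid_arc_D_Gamma[OF D y] xy by (auto simp: valid_arc_def)
  then have uncross: "uncross D0 D"
    unfolding D0_def D_eq xy using uncrossI[OF order] by simp
  have "enat t2 < s2" "enat t1 < s1"
    using \<open>enat t1 < s2\<close> order by (metis enat_ord_simps(2) order.strict_trans)+
  then have "\<forall>a\<in>#D0. valid_arc a"
    using valid_arc_D_Gamma[OF D] \<open>1 \<le> t2\<close> order unfolding D0_def D_eq by (auto simp: valid_arc_def)
  then have "D0 \<in> \<D>"
    using D_Gamma_if_same_sources_targets[OF D] uncross_same_sources_targets[OF uncross] by simp
  then show ?thesis using uncross by blast
qed

lemma uncross_path_D_Gamma:
  "uncross\<^sup>*\<^sup>* D' D \<Longrightarrow> D' \<in> \<D> \<Longrightarrow> D \<in> \<D> \<and> (D = D' \<or> crossings D < crossings D')"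
proof (induction rule: rtranclp_induct)
  case (step D1 D)
  then show ?case using uncross_D_Gamma crossings_uncross_less by fastforce
qed simp

lemma uncross_path_if_arc_le:
  assumes "D \<in> \<D>" and "D' \<in> \<D>" and "arc_le D D'"
  shows "uncross\<^sup>*\<^sup>* D' D"
proof -
  have "source_sum D = source_sum D'"
    using D_Gamma_same_sources_targets[OF assms(1,2)] source_sum_cong by blast
  then show ?thesis using arc_move_path_source_sum assms(3) unfolding arc_le_def by blast
qed

lemma crossings_strict_mono: "D \<in> \<D> \<Longrightarrow> D' \<in> \<D> \<Longrightarrow> arc_le D D' \<Longrightarrow> D \<noteq> D' \<Longrightarrow> crossings D < crossings D'"
  using uncross_path_if_arc_le uncross_path_D_Gamma by blast

lemma exists_between_D_Gamma:
  assumes D: "D \<in> \<D>" and D': "D' \<in> \<D>" and "arc_le D D'" and gap: "crossings D + 2 \<le> crossings D'"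
  shows "\<exists>w\<in>\<D>. arc_le D w \<and> arc_le w D' \<and> crossings D < crossings w \<and> crossings w < crossings D'"
  using uncross_path_if_arc_le[OF D D' assms(3)]
proof (cases rule: converse_rtranclpE)
  case base
  then show ?thesis using gap by simp
next
  case (step w)
  have "w \<in> \<D>" using uncross_D_Gamma[OF D' step(1)] .
  show ?thesis
  proof (cases "w = D")
    case True
    then obtain w1 w2 where w: "uncross D' w1" "uncross w1 w2" "uncross w2 D"
      using uncross_factor[OF D'] step(1) gap by force
    have w1: "w1 \<in> \<D>" using uncross_D_Gamma[OF D' w(1)] .
    have w2: "w2 \<in> \<D>" using uncross_D_Gamma[OF w1 w(2)] .
    have "crossings D < crossings w2" "crossings w2 < crossings w1" "crossings w1 < crossings D'"
      using crossings_uncross_less w D' w1 w2 by blast+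
    moreover have "arc_le D w1"
      using w(2,3) arc_le_if_uncross_path by (meson converse_rtranclp_into_rtranclp r_into_rtranclp)
    moreover have "arc_le w1 D'" using w(1) arc_le_if_uncross_path by blast
    ultimately show ?thesis using w1 by auto
  next
    case False
    then have "crossings D < crossings w" using uncross_path_D_Gamma[OF step(2) \<open>w \<in> \<D>\<close>] by blast
    moreover have "crossings w < crossings D'" using crossings_uncross_less[OF D' step(1)] .
    moreover have "arc_le D w" using arc_le_if_uncross_path[OF step(2)] .
    moreover have "arc_le w D'" using arc_le_if_uncross_path step(1) by blast
    ultimately show ?thesis using \<open>w \<in> \<D>\<close> by blast
  qed
qed

lemma crossings_minimal:
  assumes D: "D \<in> \<D>" and minimal: "\<forall>w\<in>\<D>. arc_le w D \<longrightarrow> w = D"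
  shows "crossings D = 0"
proof (rule ccontr)
  assume "crossings D \<noteq> 0"
  then obtain x y where "x \<in># D" "y \<in># D" "crosses x y"
    by (auto simp: crossings_def sum_mset_0_iff)
  then obtain D' where "uncross D D'" using exists_uncross[OF D] by blast
  then show False using minimal uncross_D_Gamma[OF D] crossings_uncross_less[OF D]
      arc_le_if_uncross_path by blast
qed

lemma crossings_maximal:
  assumes D: "D \<in> \<D>" and maximal: "\<forall>w\<in>\<D>. arc_le D w \<longrightarrow> w = D"
  shows "crossings D = source_pairs D"
proof (rule crossings_eq_source_pairs, intro ballI impI, rule ccontr)
  fix x y assume xy: "x \<in># D" "y \<in># D" "fst y < fst x" "\<not> snd y < snd x"
  then have "snd x < snd y" using targets_distinct[OF D xy(1,2)] by fastforce
  then obtain D0 where "D0 \<in> \<D>" "uncross D0 D" using exists_uncross_into[OF D xy(1-3)] by blast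
  then show False using maximal crossings_uncross_less arc_le_if_uncross_path by blast
qed

lemma graded_order_D_Gamma:
  assumes D0: "D0 \<in> \<D>"
  shows "graded_order \<D> arc_le crossings (source_pairs D0)"
proof
  show "arc_le D D" for D by (rule arc_le_refl)
  show "arc_le D1 D3" if "arc_le D1 D2" "arc_le D2 D3" for D1 D2 D3 using that by (rule arc_le_trans)
  show "crossings D < crossings D'" if "D \<in> \<D>" "D' \<in> \<D>" "arc_le D D'" "D \<noteq> D'" for D D'
    using that by (rule crossings_strict_mono)
  show "crossings D = 0" if "D \<in> \<D>" "\<forall>w\<in>\<D>. arc_le w D \<longrightarrow> w = D" for D
    using that by (rule crossings_minimal)
  show "\<exists>w\<in>\<D>. arc_le D w \<and> arc_le w D' \<and> crossings D < crossings w \<and> crossings w < crossings D'"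
    if "D \<in> \<D>" "D' \<in> \<D>" "arc_le D D'" "crossings D + 2 \<le> crossings D'" for D D'
    using that by (rule exists_between_D_Gamma)
  fix D assume D: "D \<in> \<D>"
  then have same: "source_pairs D = source_pairs D0"
    using D_Gamma_same_sources_targets[OF _ D0] source_pairs_cong by blast
  show "crossings D \<le> source_pairs D0" using crossings_le_source_pairs[of D] same by simp
  show "\<forall>w\<in>\<D>. arc_le D w \<longrightarrow> w = D \<Longrightarrow> crossings D = source_pairs D0"
    using crossings_maximal[OF D] same by simp
qed

end

lemma saturated_chain_maximal_chain:
  assumes sat: "saturated_chain_in P C" and "P \<noteq> {}" and "graded_order P arc_le rank n"
  shows "maximal_chain_in_graded_order P arc_le rank n C"
proof -
  have chain: "C \<subseteq> P" "\<forall>x\<in>C. \<forall>y\<in>C. arc_le x y \<or> arc_le y x"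
    using sat by (simp_all add: saturated_chain_in_def is_chain_in_def)
  have "w \<in> C" if w: "w \<in> P" "\<forall>c\<in>C. arc_le c w \<or> arc_le w c" for w
  proof (rule ccontr)
    assume "w \<notin> C"
    then have "C \<subset> insert w C" by blast
    moreover have "is_chain_in P (insert w C)"
      unfolding is_chain_in_def using chain w arc_le_refl by blast
    ultimately show False using sat by (auto simp: saturated_chain_in_def)
  qed
  then show ?thesis
    unfolding maximal_chain_in_graded_order_def maximal_chain_in_graded_order_axioms_def
    using assms(2,3) chain by blast
qed

theorem mainTheorem7:
  fixes \<alpha> \<beta> \<gamma> :: "nat list" and T :: "nat \<times> nat \<Rightarrow> nat"
  assumes "is_partition \<alpha>" and "is_partition \<beta>" and "is_partition \<gamma>"
    and "part \<alpha> 1 \<le> 2"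
    and "LR_tableau \<alpha> \<beta> \<gamma> T"
    and "num_entries \<beta> \<gamma> T 2 = num_entries \<beta> \<gamma> T 1
         \<or> num_entries \<beta> \<gamma> T 2 + 1 = num_entries \<beta> \<gamma> T 1"
    and "\<forall>i\<ge>1. card (row_boxes \<beta> \<gamma> i) \<le> 1"
    and "\<forall>i j. 1 \<le> i \<longrightarrow> 1 \<le> j \<longrightarrow> entries_in_row \<beta> \<gamma> T 2 j > 0
           \<longrightarrow> entries_in_row \<beta> \<gamma> T 1 i > 0 \<longrightarrow> j > i"
  shows "\<forall>C1 C2. saturated_chain_in (D_Gamma \<alpha> \<beta> \<gamma> T) C1
            \<longrightarrow> saturated_chain_in (D_Gamma \<alpha> \<beta> \<gamma> T) C2
            \<longrightarrow> chain_length C1 = chain_length C2"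
proof (intro allI impI)
  interpret single_box_LR_tableau \<alpha> \<beta> \<gamma> T using assms(5-8) by unfold_locales
  fix C1 C2 assume sat: "saturated_chain_in \<D> C1" "saturated_chain_in \<D> C2"
  show "chain_length C1 = chain_length C2"
  proof (cases "\<D> = {}")
    case True
    then show ?thesis using sat by (simp add: saturated_chain_in_def is_chain_in_def)
  next
    case False
    then obtain D0 where D0: "D0 \<in> \<D>" by blast
    have "card C1 = source_pairs D0 + 1" "card C2 = source_pairs D0 + 1"
      using maximal_chain_in_graded_order.card_chain saturated_chain_maximal_chain
        graded_order_D_Gamma[OF D0] sat False by blast+
    then show ?thesis by (simp add: chain_length_def)
  qed
qed

end
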